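(* Let $\mathcal{D}=(\gamma,s_0,(E_i)_{i\in N})$ be a PPD, $i\in N$, and $\omega$ an $\mathrm{LTL}_f$ formula. Then there exists an individual $k$-plan $\pi$ for $i$ such that $i$ does not anticipate AAR for $\omega$ in $\pi$.
   Context: Let $N$ be a finite set of agents, $P$ a finite set of propositional atoms, $S=2^P$ the set of states, and $A$ a finite nonempty set of action names containing a distinguished action $\mathit{skip}$. The language $\mathcal{L}_{PL+}$ is generated by $\phi ::= p \mid do(i,a) \mid \neg\phi \mid \phi\wedge\phi$ ($p\in P$, $i\in N$, $a\in A$). A $k$-history is a pair $H=(H_{st},H_{act})$ with $H_{st}:\{0,\dots,k\}\to S$ and $H_{act}:N\times\{0,\dots,k-1\}\to A$; $H,t\models p$ iff $p\in H_{st}(t)$, $H,t\models do(i,a)$ iff $t<k$ and $H_{act}(i,t)=a$, Boolean connectives as usual. An action theory is a pair $\gamma=(\gamma^+,\gamma^-)$ of functions $N\times A\times P\to\mathcal{L}_{PL+}$ with $\gamma^{+}(i,\mathit{skip},p)=\gamma^{-}(i,\mathit{skip},p)=\bot$. A $k$-history $H$ is $\gamma$-compatible if for every $t<k$, $H_{st}(t+1)=(H_{st}(t)\setminus D_t)\cup U_t$, where $D_t$ is the set of $p$ with $H,t\models\gamma^-(i,H_{act}(i,t),p)$ for some $i$ and $H,t\models\neg\gamma^+(j,H_{act}(j,t),p)$ for all $j$, and $U_t$ is the set of $p$ with $H,t\models\gamma^+(i,H_{act}(i,t),p)$ for some $i$ and $H,t\models\neg\gamma^-(j,H_{act}(j,t),p)$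 for all $j$. A joint $k$-plan for a coalition $J\subseteq N$ is a function $\pi$ assigning to each $i\in J$ a sequence $\pi(i):\{0,\dots,k-1\}\to A$ (an individual plan if $J=\{i\}$). For $J'\subseteq J$, $\pi^{J'}$ is the restriction of $\pi$ to $J'$. A joint $k$-plan $\pi_2$ for $N$ is compatible with a $k$-plan $\pi_1$ for $J$ if $\pi_2^J=\pi_1$. For a state $s$, $H^{\pi,s,\gamma}$ is the unique $\gamma$-compatible $k$-history with $H_{st}(0)=s$ and $H_{act}(i,t)=\pi(i)(t)$. $\mathrm{LTL}_f$ formulas: $\phi::=p\mid do(i,a)\mid\neg\phi\mid\phi\wedge\phi\mid X\phi\mid\phi\,U\,\phi$, with $H,t\models X\phi$ iff $t<k$ and $H,t+1\models\phi$, and $H,t\models\phi_1U\phi_2$ iff there is $t'$ with $t\le t'\le k$, $H,t'\models\phi_2$ and $H,t''\models\phi_1$ for all $t\le t''<t'$; $H\models\phi$ means $H,0\models\phi$. A PPD is $\mathcal{D}=(\gamma,s_0,(E_i)_{i\in N})$ with $\gamma$ an action theory, $s_0\in S$ the initial state, and $E_i\subseteq S$ the set of initial states agent $i$ considers possible. Throughout, a horizon $k$ is fixed and "joint plan" means joint $k$-plan for $N$. For $i\in N$, a joint plan $\pi_1$, a state $s$ and an $\mathrm{LTL}_f$ formula $\omega$: $i$ bears Causal Active Responsibility (CAR) for $\omega$ in $(\pi_1,s)$ if $H^{\pi_2,s,\gamma}\models\omega$ for every joint plan $\pi_2$ compatible with $\pi_1^{\{i\}}$, and there is a joint plan $\pi_3$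 with $H^{\pi_3,s,\gamma}\not\models\omega$; $i$ bears Agentive Active Responsibility (AAR) for $\omega$ in $(\pi_1,s)$ if $i$ bears CAR for $\omega$ in $(\pi_1,s)$ and $H^{\pi_2,s',\gamma}\models\omega$ for every joint plan $\pi_2$ compatible with $\pi_1^{\{i\}}$ and every $s'\in E_i$. For an individual $k$-plan $\pi$ of $i$, $i$ anticipates AAR for $\omega$ in $\pi$ if there exist $s_1\in E_i$ and a joint plan $\pi_1$ compatible with $\pi$ such that $i$ bears AAR for $\omega$ in $(\pi_1,s_1)$. *)

theory Defs
  imports Main
begin

text \<open>Agents, atoms and action names are finite types: N = UNIV::'ag set,
  P = UNIV::'p set, A = UNIV::'act set (nonempty since HOL types are nonempty).
  States are sets of atoms.\<close>

datatype ('p, 'ag, 'act) plf =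
    PAtom 'p | PDo 'ag 'act | PNeg "('p, 'ag, 'act) plf" | PAnd "('p, 'ag, 'act) plf" "('p, 'ag, 'act) plf"

datatype ('p, 'ag, 'act) ltlf =
    LAtom 'p | LDo 'ag 'act | LNeg "('p, 'ag, 'act) ltlf"
  | LAnd "('p, 'ag, 'act) ltlf" "('p, 'ag, 'act) ltlf"
  | LX "('p, 'ag, 'act) ltlf"
  | LU "('p, 'ag, 'act) ltlf" "('p, 'ag, 'act) ltlf"

text \<open>A k-history: state sequence (relevant on 0..k) and action assignment (relevant on t<k).\<close>
type_synonym ('p, 'ag, 'act) hist = "(nat \<Rightarrow> 'p set) \<times> ('ag \<Rightarrow> nat \<Rightarrow> 'act)"

fun sat_pl :: "nat \<Rightarrow> ('p, 'ag, 'act) hist \<Rightarrow> nat \<Rightarrow> ('p, 'ag, 'act) plf \<Rightarrow> bool" where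
  "sat_pl k H t (PAtom p) = (p \<in> fst H t)"
| "sat_pl k H t (PDo i a) = (t < k \<and> snd H i t = a)"
| "sat_pl k H t (PNeg \<phi>) = (\<not> sat_pl k H t \<phi>)"
| "sat_pl k H t (PAnd \<phi> \<psi>) = (sat_pl k H t \<phi> \<and> sat_pl k H t \<psi>)"

fun sat_ltl :: "nat \<Rightarrow> ('p, 'ag, 'act) hist \<Rightarrow> nat \<Rightarrow> ('p, 'ag, 'act) ltlf \<Rightarrow> bool" where
  "sat_ltl k H t (LAtom p) = (p \<in> fst H t)"
| "sat_ltl k H t (LDo i a) = (t < k \<and> snd H i t = a)"
| "sat_ltl k H t (LNeg \<phi>) = (\<not> sat_ltl k H t \<phi>)"
| "sat_ltl k H t (LAnd \<phi> \<psi>) = (sat_ltl k H t \<phi> \<and> sat_ltl k H t \<psi>)"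
| "sat_ltl k H t (LX \<phi>) = (t < k \<and> sat_ltl k H (Suc t) \<phi>)"
| "sat_ltl k H t (LU \<phi> \<psi>) =
     (\<exists>t'. t \<le> t' \<and> t' \<le> k \<and> sat_ltl k H t' \<psi> \<and> (\<forall>t''. t \<le> t'' \<and> t'' < t' \<longrightarrow> sat_ltl k H t'' \<phi>))"

definition models :: "nat \<Rightarrow> ('p, 'ag, 'act) hist \<Rightarrow> ('p, 'ag, 'act) ltlf \<Rightarrow> bool" where
  "models k H \<omega> = sat_ltl k H 0 \<omega>"

text \<open>Action theory gamma = (gp, gm); skip must map to bottom (an unsatisfiable formula).\<close>
type_synonym ('p, 'ag, 'act) acttheory = "('ag \<Rightarrow> 'act \<Rightarrow> 'p \<Rightarrow> ('p, 'ag, 'act) plf)"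

definition action_theory ::
  "'act \<Rightarrow> ('p, 'ag, 'act) acttheory \<Rightarrow> ('p, 'ag, 'act) acttheory \<Rightarrow> nat \<Rightarrow> bool" where
  "action_theory skip gp gm k =
     (\<forall>i p H t. \<not> sat_pl k H t (gp i skip p) \<and> \<not> sat_pl k H t (gm i skip p))"

definition Dset :: "nat \<Rightarrow> ('p, 'ag, 'act) acttheory \<Rightarrow> ('p, 'ag, 'act) acttheory
    \<Rightarrow> ('p, 'ag, 'act) hist \<Rightarrow> nat \<Rightarrow> 'p set" where
  "Dset k gp gm H t = {p. (\<exists>i. sat_pl k H t (gm i (snd H i t) p))
                        \<and> (\<forall>j. \<not> sat_pl k H t (gp j (snd H j t) p))}"

definition Uset :: "nat \<Rightarrow> ('p, 'ag, 'act) acttheory \<Rightarrow> ('p, 'ag, 'act) acttheory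
    \<Rightarrow> ('p, 'ag, 'act) hist \<Rightarrow> nat \<Rightarrow> 'p set" where
  "Uset k gp gm H t = {p. (\<exists>i. sat_pl k H t (gp i (snd H i t) p))
                        \<and> (\<forall>j. \<not> sat_pl k H t (gm j (snd H j t) p))}"

definition gamma_compatible :: "nat \<Rightarrow> ('p, 'ag, 'act) acttheory \<Rightarrow> ('p, 'ag, 'act) acttheory
    \<Rightarrow> ('p, 'ag, 'act) hist \<Rightarrow> bool" where
  "gamma_compatible k gp gm H =
     (\<forall>t<k. fst H (Suc t) = (fst H t - Dset k gp gm H t) \<union> Uset k gp gm H t)"

text \<open>Evaluation of a
  PL+ formula at time t only depends on the state at t and the actions at t, so the
  history with constant state sequence is used to compute the step.\<close>
fun traj :: "nat \<Rightarrow> ('p, 'ag, 'act) acttheory \<Rightarrow> ('p, 'ag, 'act) acttheory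
    \<Rightarrow> ('ag \<Rightarrow> nat \<Rightarrow> 'act) \<Rightarrow> 'p set \<Rightarrow> nat \<Rightarrow> 'p set" where
  "traj k gp gm \<pi> s 0 = s"
| "traj k gp gm \<pi> s (Suc t) =
     (let H = ((\<lambda>_. traj k gp gm \<pi> s t), \<pi>)
      in (traj k gp gm \<pi> s t - Dset k gp gm H t) \<union> Uset k gp gm H t)"

definition hist :: "nat \<Rightarrow> ('p, 'ag, 'act) acttheory \<Rightarrow> ('p, 'ag, 'act) acttheory
    \<Rightarrow> ('ag \<Rightarrow> nat \<Rightarrow> 'act) \<Rightarrow> 'p set \<Rightarrow> ('p, 'ag, 'act) hist" where
  "hist k gp gm \<pi> s = (traj k gp gm \<pi> s, \<pi>)"

text \<open>Joint k-plans for N are functions 'ag => nat => 'act (only t<k matters);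
  an individual k-plan is nat => 'act. pi2 is compatible with the individual plan
  sigma of agent i if they agree on 0..k-1.\<close>
definition compat :: "nat \<Rightarrow> ('ag \<Rightarrow> nat \<Rightarrow> 'act) \<Rightarrow> 'ag \<Rightarrow> (nat \<Rightarrow> 'act) \<Rightarrow> bool" where
  "compat k \<pi>2 i \<sigma> = (\<forall>t<k. \<pi>2 i t = \<sigma> t)"

definition CAR :: "nat \<Rightarrow> ('p, 'ag, 'act) acttheory \<Rightarrow> ('p, 'ag, 'act) acttheory
    \<Rightarrow> 'ag \<Rightarrow> ('p, 'ag, 'act) ltlf \<Rightarrow> ('ag \<Rightarrow> nat \<Rightarrow> 'act) \<Rightarrow> 'p set \<Rightarrow> bool" where
  "CAR k gp gm i \<omega> \<pi>1 s =
     ((\<forall>\<pi>2. compat k \<pi>2 i (\<pi>1 i) \<longrightarrow> models k (hist k gp gm \<pi>2 s) \<omega>)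
      \<and> (\<exists>\<pi>3. \<not> models k (hist k gp gm \<pi>3 s) \<omega>))"

definition AAR :: "nat \<Rightarrow> ('p, 'ag, 'act) acttheory \<Rightarrow> ('p, 'ag, 'act) acttheory
    \<Rightarrow> ('ag \<Rightarrow> 'p set set) \<Rightarrow> 'ag \<Rightarrow> ('p, 'ag, 'act) ltlf \<Rightarrow> ('ag \<Rightarrow> nat \<Rightarrow> 'act) \<Rightarrow> 'p set \<Rightarrow> bool" where
  "AAR k gp gm E i \<omega> \<pi>1 s =
     (CAR k gp gm i \<omega> \<pi>1 s
      \<and> (\<forall>\<pi>2 s'. compat k \<pi>2 i (\<pi>1 i) \<and> s' \<in> E i \<longrightarrow> models k (hist k gp gm \<pi>2 s') \<omega>))"

definition anticipates_AAR :: "nat \<Rightarrow> ('p, 'ag, 'act) acttheory \<Rightarrow> ('p, 'ag, 'act) acttheory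
    \<Rightarrow> ('ag \<Rightarrow> 'p set set) \<Rightarrow> 'ag \<Rightarrow> ('p, 'ag, 'act) ltlf \<Rightarrow> (nat \<Rightarrow> 'act) \<Rightarrow> bool" where
  "anticipates_AAR k gp gm E i \<omega> \<sigma> =
     (\<exists>s1 \<in> E i. \<exists>\<pi>1. compat k \<pi>1 i \<sigma> \<and> AAR k gp gm E i \<omega> \<pi>1 s1)"

end

theory Submission
  imports Defs
begin

text \<open>If agent i anticipated AAR in every individual plan, take any such plan: its
  causal part yields a joint plan \<pi> failing \<omega> from some s \<in> E i. Anticipating AAR in
  i's share \<pi> i would force \<omega> along every joint plan compatible with \<pi> i from every
  state of E i, in particular along \<pi> from s. Nothing about the dynamics is used.\<close>

lemma compat_own_plan: "compat k \<pi> i (\<pi> i)"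
  unfolding compat_def by simp

lemma anticipates_AAR_models:
  assumes "anticipates_AAR k gp gm E i \<omega> \<sigma>"
    and "s \<in> E i" and "compat k \<pi> i \<sigma>"
  shows "models k (hist k gp gm \<pi> s) \<omega>"
proof -
  obtain \<pi>1 s1 where "compat k \<pi>1 i \<sigma>" and aar: "AAR k gp gm E i \<omega> \<pi>1 s1"
    using assms(1) unfolding anticipates_AAR_def by blast
  have "compat k \<pi> i (\<pi>1 i)"
    using \<open>compat k \<pi>1 i \<sigma>\<close> assms(3) unfolding compat_def by simp
  with aar assms(2) show ?thesis
    unfolding AAR_def by blast
qed

lemma anticipates_AAR_counterexample:
  assumes "anticipates_AAR k gp gm E i \<omega> \<sigma>"
  obtains \<pi> s where "s \<in> E i" and "\<not> models k (hist k gp gm \<pi> s) \<omega>"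
  using assms unfolding anticipates_AAR_def AAR_def CAR_def by blast

theorem theorem3:
  fixes k :: nat and skip :: "'act::finite"
    and gp gm :: "('p::finite, 'ag::finite, 'act) acttheory"
    and s0 :: "'p set" and E :: "'ag \<Rightarrow> 'p set set"
    and i :: 'ag and \<omega> :: "('p, 'ag, 'act) ltlf"
  assumes "action_theory skip gp gm k"
  shows "\<exists>\<sigma> :: nat \<Rightarrow> 'act. \<not> anticipates_AAR k gp gm E i \<omega> \<sigma>"
proof (cases "anticipates_AAR k gp gm E i \<omega> undefined")
  case False
  then show ?thesis by blast
next
  case True
  then obtain \<pi> s where "s \<in> E i" and fails: "\<not> models k (hist k gp gm \<pi> s) \<omega>"
    by (rule anticipates_AAR_counterexample)
  have "\<not> anticipates_AAR k gp gm E i \<omega> (\<pi> i)"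
  proof
    assume "anticipates_AAR k gp gm E i \<omega> (\<pi> i)"
    then have "models k (hist k gp gm \<pi> s) \<omega>"
      using \<open>s \<in> E i\<close> compat_own_plan by (rule anticipates_AAR_models)
    with fails show False ..
  qed
  then show ?thesis by blast
qed

end
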